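(* Let $\lambda,n_c,g_+,g_->0$ with $n_c<1$, let $0<\bar c<c_B/2$, set $\alpha=\sqrt{g_-/(g_++g_-)}$, and let $R_{vitro}>0$ be the unique positive root of $$\frac{\bar c}{c_B}\Big(\cosh(\sqrt\lambda R)+\sqrt{n_c}\sinh(\sqrt\lambda R)\Big)-\sqrt{n_c}\sinh\big(\sqrt\lambda(1-\alpha)R\big)-\cosh\big(\sqrt\lambda(1-\alpha)R\big)=0,$$ and $R_{vivo}>0$ the unique solution of $$\frac{c_B}{2}\Big(e^{-\alpha\sqrt\lambda R}+\frac{1-\sqrt{n_c}}{1+\sqrt{n_c}}\,e^{(\alpha-2)\sqrt\lambda R}\Big)=\bar c.$$ Let $\sigma_{vitro}=R_{vitro}\big(\sqrt{(g_++g_-)g_-}-g_-\big)$ and $\sigma_{vivo}=R_{vivo}\big(\sqrt{(g_++g_-)g_-}-g_-\big)$. Then $R_{vivo}\le R_{vitro}$ and $\sigma_{vivo}\le\sigma_{vitro}$.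
   Context: These quantities are the front position and velocity of the explicit traveling waves of the Hele-Shaw tumor model with nutrient, in vitro and in vivo respectively, for the piecewise constant choices $\psi(1)=\lambda$, $\psi(n)=\lambda n_c$ for $0<n<1$, $\psi(0)=0$, and $G(c)=g_+$ for $c>\bar c$, $G(c)=-g_-$ for $c<\bar c$. *)

theory Defs
  imports Complex_Main
begin

definition vitro_eq :: "real \<Rightarrow> real \<Rightarrow> real \<Rightarrow> real \<Rightarrow> real \<Rightarrow> real \<Rightarrow> real" where
  "vitro_eq lam nc cbar cB \<alpha> R =
     cbar / cB * (cosh (sqrt lam * R) + sqrt nc * sinh (sqrt lam * R))
     - sqrt nc * sinh (sqrt lam * (1 - \<alpha>) * R) - cosh (sqrt lam * (1 - \<alpha>) * R)"

definition vivo_lhs :: "real \<Rightarrow> real \<Rightarrow> real \<Rightarrow> real \<Rightarrow> real \<Rightarrow> real" where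
  "vivo_lhs lam nc cB \<alpha> R =
     cB / 2 * (exp (- \<alpha> * sqrt lam * R)
       + (1 - sqrt nc) / (1 + sqrt nc) * exp ((\<alpha> - 2) * sqrt lam * R))"

end

theory Submission
  imports Defs
begin

text \<open>The in vivo left-hand side decreases strictly in \<open>R\<close>, so \<open>R_vivo \<le> R_vitro\<close> follows once
  it is at most \<open>cbar\<close> at \<open>R_vitro\<close>. With \<open>k = \<surd>nc\<close> and \<open>q = (1 - k) / (1 + k) \<in> [0, 1]\<close>,
  every combination \<open>cosh y + k sinh y\<close> equals \<open>(1 + k)/2 (e\<^sup>y + q e\<^sup>-\<^sup>y)\<close>; at a root of the in
  vitro equation this turns the claim into a termwise comparison of exponentials. The velocity
  bound then follows from \<open>\<surd>((g\<^sub>+ + g\<^sub>-) g\<^sub>-) \<ge> g\<^sub>-\<close>.\<close>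

lemma cosh_add_mult_sinh:
  fixes x k :: real
  shows "cosh x + k * sinh x = ((1 + k) * exp x + (1 - k) * exp (- x)) / 2"
  by (simp add: cosh_def sinh_def field_simps)

lemma exp_pair_product_le:
  fixes a x q :: real
  assumes "x \<ge> 0" and "0 \<le> q" and "q \<le> 1"
  shows "(exp (- a * x) + q * exp ((a - 2) * x)) * (exp x + q * exp (- x))
         \<le> 2 * (exp ((1 - a) * x) + q * exp ((a - 1) * x))"
proof -
  have expand: "(exp (- a * x) + q * exp ((a - 2) * x)) * (exp x + q * exp (- x))
      = exp ((1 - a) * x) + q * exp (- (1 + a) * x) + q * exp ((a - 1) * x) + q\<^sup>2 * exp ((a - 3) * x)"
    by (simp add: algebra_simps power2_eq_square flip: exp_add)
  have "q * exp (- (1 + a) * x) \<le> 1 * exp ((1 - a) * x)"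
    using assms by (intro mult_mono) (auto simp: algebra_simps)
  moreover have "q\<^sup>2 * exp ((a - 3) * x) \<le> q * exp ((a - 1) * x)"
    using assms by (intro mult_mono) (auto simp: algebra_simps power2_eq_square mult_left_le)
  ultimately show ?thesis
    unfolding expand mult_1 by argo
qed

lemma vivo_lhs_le_at_vitro_root:
  fixes lam nc cbar cB \<alpha> R :: real
  assumes "lam \<ge> 0" and "R \<ge> 0" and "0 \<le> nc" and "nc \<le> 1" and "cB > 0"
    and root: "vitro_eq lam nc cbar cB \<alpha> R = 0"
  shows "vivo_lhs lam nc cB \<alpha> R \<le> cbar"
proof -
  define x where "x = sqrt lam * R"
  define k where "k = sqrt nc"
  define q where "q = (1 - k) / (1 + k)"
  have x: "x \<ge> 0" and k: "0 \<le> k" "k \<le> 1"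
    using assms unfolding x_def k_def by auto
  have q: "0 \<le> q" "q \<le> 1" and qk: "1 - k = (1 + k) * q"
    using k unfolding q_def by (auto simp: field_simps)
  define P where "P = (1 + k) / 2 * (exp x + q * exp (- x))"
  have P: "P > 0"
    using k q unfolding P_def by (simp add: add_pos_nonneg)
  have vitro: "cbar / cB * P = (1 + k) / 2 * (exp ((1 - \<alpha>) * x) + q * exp ((\<alpha> - 1) * x))"
  proof -
    have "cbar / cB * (cosh x + k * sinh x) = cosh ((1 - \<alpha>) * x) + k * sinh ((1 - \<alpha>) * x)"
      using root unfolding vitro_eq_def x_def k_def by (simp add: algebra_simps)
    moreover have "P = cosh x + k * sinh x"
      unfolding P_def cosh_add_mult_sinh qk by (simp add: field_simps)
    moreover have "cosh ((1 - \<alpha>) * x) + k * sinh ((1 - \<alpha>) * x)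
        = (1 + k) / 2 * (exp ((1 - \<alpha>) * x) + q * exp ((\<alpha> - 1) * x))"
      unfolding cosh_add_mult_sinh qk by (simp add: algebra_simps) (simp add: field_simps)
    ultimately show ?thesis
      by simp
  qed
  have "vivo_lhs lam nc cB \<alpha> R = cB / 2 * (exp (- \<alpha> * x) + q * exp ((\<alpha> - 2) * x))"
    unfolding vivo_lhs_def x_def q_def k_def by (simp add: mult.assoc)
  then have "vivo_lhs lam nc cB \<alpha> R * P
      = cB / 2 * (1 + k) / 2 * ((exp (- \<alpha> * x) + q * exp ((\<alpha> - 2) * x)) * (exp x + q * exp (- x)))"
    unfolding P_def by simp
  also have "\<dots> \<le> cB / 2 * (1 + k) / 2 * (2 * (exp ((1 - \<alpha>) * x) + q * exp ((\<alpha> - 1) * x)))"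
    using exp_pair_product_le[OF x q] k \<open>cB > 0\<close> by (intro mult_left_mono) auto
  also have "\<dots> = cbar * P"
    using vitro \<open>cB > 0\<close> by (simp add: field_simps)
  finally show ?thesis
    using P by simp
qed

lemma vivo_lhs_strict_antimono:
  fixes lam nc cB \<alpha> R R' :: real
  assumes "lam > 0" and "cB > 0" and "0 < \<alpha>" and "\<alpha> \<le> 2" and "0 \<le> nc" and "nc \<le> 1"
    and "R < R'"
  shows "vivo_lhs lam nc cB \<alpha> R' < vivo_lhs lam nc cB \<alpha> R"
proof -
  have "exp (- \<alpha> * sqrt lam * R') < exp (- \<alpha> * sqrt lam * R)"
    using assms by simp
  moreover have "exp ((\<alpha> - 2) * sqrt lam * R') \<le> exp ((\<alpha> - 2) * sqrt lam * R)"
    using assms by (simp add: mult_left_mono_neg mult_nonpos_nonneg)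
  moreover have "0 \<le> (1 - sqrt nc) / (1 + sqrt nc)"
    using assms by simp
  ultimately show ?thesis
    unfolding vivo_lhs_def using \<open>cB > 0\<close>
    by (intro mult_strict_left_mono add_less_le_mono mult_left_mono) auto
qed

theorem mainTheorem6:
  fixes lam nc gp gm cbar cB \<alpha> R_vitro R_vivo :: real
  assumes "lam > 0" and "nc > 0" and "gp > 0" and "gm > 0" and "nc < 1"
    and "0 < cbar" and "cbar < cB / 2"
    and "\<alpha> = sqrt (gm / (gp + gm))"
    and "R_vitro > 0" and "vitro_eq lam nc cbar cB \<alpha> R_vitro = 0"
    and "\<forall>R>0. vitro_eq lam nc cbar cB \<alpha> R = 0 \<longrightarrow> R = R_vitro"
    and "R_vivo > 0" and "vivo_lhs lam nc cB \<alpha> R_vivo = cbar"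
    and "\<forall>R>0. vivo_lhs lam nc cB \<alpha> R = cbar \<longrightarrow> R = R_vivo"
  shows "R_vivo \<le> R_vitro
    \<and> R_vivo * (sqrt ((gp + gm) * gm) - gm) \<le> R_vitro * (sqrt ((gp + gm) * gm) - gm)"
proof -
  have cB: "cB > 0"
    using assms(6,7) by linarith
  have \<alpha>: "0 < \<alpha>" "\<alpha> \<le> 1"
    using assms(3,4,8) by simp_all
  have "vivo_lhs lam nc cB \<alpha> R_vitro \<le> vivo_lhs lam nc cB \<alpha> R_vivo"
    using vivo_lhs_le_at_vitro_root[of lam R_vitro nc cB cbar \<alpha>] assms(1,2,5,9,10,13) cB by simp
  then have R: "R_vivo \<le> R_vitro"
    using vivo_lhs_strict_antimono[of lam cB \<alpha> nc R_vitro R_vivo] assms(1,2,5) cB \<alpha> by fastforce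
  have "gm \<le> sqrt ((gp + gm) * gm)"
    using assms(3,4) by (intro real_le_rsqrt) (simp add: power2_eq_square)
  with R show ?thesis
    by (simp add: mult_right_mono)
qed

end
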